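(* Let $(G,S,T,k,\ell)$ be an instance of \textsc{Token Sliding Optimization} and let $V(G)=H\cup M$ be a partition such that $G[H]$ has maximum degree at most $\Delta$. Let $\sigma$ be a reconfiguration sequence from $S$ to $T$ of length at most $\ell$, let $V(\sigma)$ be the set of vertices touched by $\sigma$, and let $\chi:H\to\{\mathcal{R},\mathcal{B}\}$ be a coloring that is successful for $\sigma$. Let $H_{\mathcal{R}}=\chi^{-1}(\mathcal{R})$. Then $V(\sigma)$ has non-empty intersection with at most $2\ell$ connected components of $G[H_{\mathcal{R}}]$, and each connected component of $G[H_{\mathcal{R}}]$ that intersects $V(\sigma)$ has at most $2\ell$ vertices.
   Context: An instance $(G,S,T,k,\ell)$ of \textsc{Token Sliding Optimization}: $G$ a simple graph, $S,T$ independent sets of size $k$, $\ell\ge1$. A reconfiguration sequence of length $m$ from $S$ to $T$ is a sequence $S=I_0,\dots,I_m=T$ of independent sets of size $k$ with each $I_{j+1}=(I_j\setminus\{u\})\cup\{v\}$ for some $u\in I_j$, $v\notin I_j$, $\{u,v\}\in E(G)$ (a token slides from $u$ to $v$). A vertex is touched by $\sigma$ if at some step a token slides from it to a neighbor or from a neighbor to it. For $Y\subseteq H$, $N_H(Y)=\{v\in H\setminus Y: v\text{ adjacent to some vertex of }Y\}$. The coloring $\chi$ is successful if every vertex of $V(\sigma)\cap H$ is colored $\mathcal{R}$ and every vertex of $N_H(V(\sigma)\cap H)$ is colored $\mathcal{B}$. *)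

theory Defs
  imports Main
begin

definition simple_graph :: "'a set \<Rightarrow> ('a \<Rightarrow> 'a \<Rightarrow> bool) \<Rightarrow> bool" where
  "simple_graph V E \<longleftrightarrow> finite V \<and> (\<forall>u v. E u v \<longrightarrow> u \<in> V \<and> v \<in> V)
     \<and> (\<forall>u v. E u v \<longrightarrow> E v u) \<and> (\<forall>v. \<not> E v v)"

definition indep_set :: "'a set \<Rightarrow> ('a \<Rightarrow> 'a \<Rightarrow> bool) \<Rightarrow> 'a set \<Rightarrow> bool" where
  "indep_set V E I \<longleftrightarrow> I \<subseteq> V \<and> (\<forall>u\<in>I. \<forall>v\<in>I. \<not> E u v)"

definition slide :: "('a \<Rightarrow> 'a \<Rightarrow> bool) \<Rightarrow> 'a \<Rightarrow> 'a \<Rightarrow> 'a set \<Rightarrow> 'a set \<Rightarrow> bool" where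
  "slide E u v I J \<longleftrightarrow> u \<in> I \<and> v \<notin> I \<and> E u v \<and> J = (I - {u}) \<union> {v}"

definition reconf_seq :: "'a set \<Rightarrow> ('a \<Rightarrow> 'a \<Rightarrow> bool) \<Rightarrow> nat \<Rightarrow> 'a set \<Rightarrow> 'a set \<Rightarrow> 'a set list \<Rightarrow> bool" where
  "reconf_seq V E k S T Is \<longleftrightarrow> Is \<noteq> [] \<and> hd Is = S \<and> last Is = T
     \<and> (\<forall>I\<in>set Is. indep_set V E I \<and> card I = k)
     \<and> (\<forall>j. Suc j < length Is \<longrightarrow> (\<exists>u v. slide E u v (Is ! j) (Is ! Suc j)))"

definition seq_length :: "'a set list \<Rightarrow> nat" where
  "seq_length Is = length Is - 1"

definition touched :: "('a \<Rightarrow> 'a \<Rightarrow> bool) \<Rightarrow> 'a set list \<Rightarrow> 'a set" where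
  "touched E Is = {x. \<exists>j u v. Suc j < length Is \<and> slide E u v (Is ! j) (Is ! Suc j) \<and> (x = u \<or> x = v)}"

definition nbhd_in :: "('a \<Rightarrow> 'a \<Rightarrow> bool) \<Rightarrow> 'a set \<Rightarrow> 'a set \<Rightarrow> 'a set" where
  "nbhd_in E H Y = {v \<in> H - Y. \<exists>y\<in>Y. E v y}"

datatype colour = Red | Blue

definition successful :: "('a \<Rightarrow> 'a \<Rightarrow> bool) \<Rightarrow> 'a set \<Rightarrow> ('a \<Rightarrow> colour) \<Rightarrow> 'a set list \<Rightarrow> bool" where
  "successful E H \<chi> Is \<longleftrightarrow> (\<forall>v \<in> touched E Is \<inter> H. \<chi> v = Red)
     \<and> (\<forall>v \<in> nbhd_in E H (touched E Is \<inter> H). \<chi> v = Blue)"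

definition max_deg_le :: "('a \<Rightarrow> 'a \<Rightarrow> bool) \<Rightarrow> 'a set \<Rightarrow> nat \<Rightarrow> bool" where
  "max_deg_le E H d \<longleftrightarrow> (\<forall>v\<in>H. card {u \<in> H. E v u} \<le> d)"

definition comp_of :: "('a \<Rightarrow> 'a \<Rightarrow> bool) \<Rightarrow> 'a set \<Rightarrow> 'a \<Rightarrow> 'a set" where
  "comp_of E X v = {w. (\<lambda>x y. x \<in> X \<and> y \<in> X \<and> E x y)\<^sup>*\<^sup>* v w}"

definition components :: "('a \<Rightarrow> 'a \<Rightarrow> bool) \<Rightarrow> 'a set \<Rightarrow> 'a set set" where
  "components E X = comp_of E X ` X"

end

theory Submission
  imports Defs
begin

text \<open>Each step of \<sigma> touches at most two vertices, so \<sigma> touches at most 2\<ell> vertices. In a successful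
  colouring every red neighbour of a touched red vertex is itself touched; hence a
  red component meeting V(\<sigma>) lies entirely inside V(\<sigma>), and distinct such components are
  disjoint subsets of V(\<sigma>). Both bounds follow from |V(\<sigma>)| \<le> 2\<ell>.\<close>

lemma slide_endpoints_unique:
  assumes "slide E u v I J" "slide E u' v' I J"
  shows "u = u' \<and> v = v'"
  using assms unfolding slide_def by blast

lemma finite_touched_card_le:
  "finite (touched E Is) \<and> card (touched E Is) \<le> 2 * seq_length Is"
proof -
  define ends where
    "ends j = {x. \<exists>u v. slide E u v (Is ! j) (Is ! Suc j) \<and> (x = u \<or> x = v)}" for j
  have ends: "finite (ends j) \<and> card (ends j) \<le> 2" for j
  proof (cases "\<exists>u v. slide E u v (Is ! j) (Is ! Suc j)")
    case True
    then obtain u v where uv: "slide E u v (Is ! j) (Is ! Suc j)" by blast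
    then have "ends j \<subseteq> {u, v}"
      unfolding ends_def using slide_endpoints_unique[OF uv] by blast
    moreover have "card {u, v} \<le> 2" by (simp add: card_insert_if)
    ultimately show ?thesis by (meson card_mono finite.emptyI finite.insertI finite_subset order_trans)
  next
    case False
    then show ?thesis unfolding ends_def by simp
  qed
  have touched_eq: "touched E Is = (\<Union>j<seq_length Is. ends j)"
  proof -
    have "Suc j < length Is \<longleftrightarrow> j < seq_length Is" for j
      unfolding seq_length_def by arith
    then show ?thesis unfolding touched_def ends_def lessThan_iff by blast
  qed
  have "card (\<Union>j<seq_length Is. ends j) \<le> (\<Sum>j<seq_length Is. card (ends j))"
    by (rule card_UN_le) simp
  also have "\<dots> \<le> (\<Sum>j<seq_length Is. 2)"
    by (rule sum_mono) (use ends in auto)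
  finally show ?thesis using touched_eq ends by simp
qed

definition edge_closed :: "('a \<Rightarrow> 'a \<Rightarrow> bool) \<Rightarrow> 'a set \<Rightarrow> 'a set \<Rightarrow> bool" where
  "edge_closed E X Y \<longleftrightarrow> (\<forall>y z. y \<in> Y \<inter> X \<longrightarrow> z \<in> X \<longrightarrow> E y z \<longrightarrow> z \<in> Y)"

lemma comp_of_subset_edge_closed:
  assumes "edge_closed E X Y" "v \<in> Y"
  shows "comp_of E X v \<subseteq> Y"
proof
  fix w assume "w \<in> comp_of E X v"
  then have "(\<lambda>x y. x \<in> X \<and> y \<in> X \<and> E x y)\<^sup>*\<^sup>* v w" unfolding comp_of_def by simp
  then show "w \<in> Y"
  proof (induction rule: rtranclp_induct)
    case base
    show ?case using assms(2) .
  next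
    case (step y z)
    then show ?case using assms(1) unfolding edge_closed_def by blast
  qed
qed

lemma comp_of_eq_if_mem:
  assumes "symp E" "w \<in> comp_of E X v"
  shows "comp_of E X w = comp_of E X v"
proof -
  let ?P = "\<lambda>x y. x \<in> X \<and> y \<in> X \<and> E x y"
  have "symp ?P" using assms(1) by (simp add: symp_def)
  have vw: "?P\<^sup>*\<^sup>* v w" using assms(2) unfolding comp_of_def by simp
  have wv: "?P\<^sup>*\<^sup>* w v" using sympD[OF symp_rtranclp[OF \<open>symp ?P\<close>] vw] .
  show ?thesis
    unfolding comp_of_def using rtranclp_trans[OF vw] rtranclp_trans[OF wv] by auto
qed

lemma component_meeting_edge_closed:
  assumes "symp E" "edge_closed E X Y" "C \<in> components E X" "x \<in> C \<inter> Y"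
  shows "C = comp_of E X x" "C \<subseteq> Y"
proof -
  obtain v where C: "C = comp_of E X v" using assms(3) unfolding components_def by blast
  then show "C = comp_of E X x" using comp_of_eq_if_mem[OF assms(1), of x X v] assms(4) by simp
  then show "C \<subseteq> Y" using comp_of_subset_edge_closed[OF assms(2)] assms(4) by simp
qed

lemma components_meeting_edge_closed_card_le:
  assumes "symp E" "edge_closed E X Y" "finite Y"
  shows "card {C \<in> components E X. C \<inter> Y \<noteq> {}} \<le> card Y"
    and "\<forall>C \<in> components E X. C \<inter> Y \<noteq> {} \<longrightarrow> card C \<le> card Y"
proof -
  have "{C \<in> components E X. C \<inter> Y \<noteq> {}} \<subseteq> comp_of E X ` Y"
    using component_meeting_edge_closed(1)[OF assms(1,2)] by blast
  then have "card {C \<in> components E X. C \<inter> Y \<noteq> {}} \<le> card (comp_of E X ` Y)"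
    using assms(3) by (simp add: card_mono)
  also have "\<dots> \<le> card Y" using assms(3) by (rule card_image_le)
  finally show "card {C \<in> components E X. C \<inter> Y \<noteq> {}} \<le> card Y" .
  show "\<forall>C \<in> components E X. C \<inter> Y \<noteq> {} \<longrightarrow> card C \<le> card Y"
  proof (intro ballI impI)
    fix C assume "C \<in> components E X" "C \<inter> Y \<noteq> {}"
    then have "C \<subseteq> Y" using component_meeting_edge_closed(2)[OF assms(1,2)] by blast
    then show "card C \<le> card Y" using assms(3) by (rule card_mono[rotated])
  qed
qed

lemma successful_touched_edge_closed:
  assumes "symp E" "successful E H \<chi> Is"
  shows "edge_closed E {v \<in> H. \<chi> v = Red} (touched E Is)"
  unfolding edge_closed_def
proof (intro allI impI)
  fix y z
  assume y: "y \<in> touched E Is \<inter> {v \<in> H. \<chi> v = Red}" and z: "z \<in> {v \<in> H. \<chi> v = Red}"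
    and "E y z"
  show "z \<in> touched E Is"
  proof (rule ccontr)
    assume "z \<notin> touched E Is"
    with y z \<open>E y z\<close> assms(1) have "z \<in> nbhd_in E H (touched E Is \<inter> H)"
      unfolding nbhd_in_def by (auto dest: sympD)
    then have "\<chi> z = Blue" using assms(2) unfolding successful_def by blast
    with z show False by simp
  qed
qed

theorem lemma4p1:
  fixes V H M :: "'a set" and E :: "'a \<Rightarrow> 'a \<Rightarrow> bool"
    and S T :: "'a set" and k l \<Delta> :: nat
    and Is :: "'a set list" and \<chi> :: "'a \<Rightarrow> colour"
  assumes "simple_graph V E"
    and "indep_set V E S" "card S = k" "indep_set V E T" "card T = k"
    and "l \<ge> 1"
    and "V = H \<union> M" "H \<inter> M = {}"
    and "max_deg_le E H \<Delta>"
    and "reconf_seq V E k S T Is" "seq_length Is \<le> l"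
    and "successful E H \<chi> Is"
  shows "card {C \<in> components E {v \<in> H. \<chi> v = Red}. C \<inter> touched E Is \<noteq> {}} \<le> 2 * l
    \<and> (\<forall>C \<in> components E {v \<in> H. \<chi> v = Red}. C \<inter> touched E Is \<noteq> {} \<longrightarrow> card C \<le> 2 * l)"
proof -
  have "symp E" using assms(1) unfolding simple_graph_def by (blast intro: sympI)
  have closed: "edge_closed E {v \<in> H. \<chi> v = Red} (touched E Is)"
    using successful_touched_edge_closed[OF \<open>symp E\<close> assms(12)] .
  have "finite (touched E Is)" and "card (touched E Is) \<le> 2 * l"
    using finite_touched_card_le[of E Is] assms(11) by auto
  with components_meeting_edge_closed_card_le[OF \<open>symp E\<close> closed] show ?thesis
    by (meson order_trans)
qed

end
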